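(* Let $H$ be a finite $p$-group with center $Z(H)$ and let $A$ be a maximal abelian subgroup of $H$. Then $m_{\mathsf{faithful}}(H)\le m_{\mathsf{faithful}}(Z(H))\,[H:A]$.
   Context: For a finite group $G$, $m_{\mathsf{faithful}}(G)$ denotes the smallest dimension of a faithful complex representation of $G$. *)

theory Defs
  imports "HOL-Algebra.Algebra" "Jordan_Normal_Form.Matrix"
begin

definition group_center :: "('a, 'b) monoid_scheme \<Rightarrow> 'a set" where
  "group_center G = {z \<in> carrier G. \<forall>g \<in> carrier G. z \<otimes>\<^bsub>G\<^esub> g = g \<otimes>\<^bsub>G\<^esub> z}"

(* A faithful complex representation of G of dimension n: a group homomorphism
   G \<rightarrow> GL_n(C) (n x n complex matrices; multiplicativity plus identity \<mapsto> identity
   forces invertibility) which is injective on the carrier. *)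
definition faithful_rep :: "('a, 'b) monoid_scheme \<Rightarrow> nat \<Rightarrow> ('a \<Rightarrow> complex mat) \<Rightarrow> bool" where
  "faithful_rep G n \<rho> \<longleftrightarrow>
     (\<forall>g \<in> carrier G. \<rho> g \<in> carrier_mat n n) \<and>
     (\<forall>g \<in> carrier G. \<forall>h \<in> carrier G. \<rho> (g \<otimes>\<^bsub>G\<^esub> h) = \<rho> g * \<rho> h) \<and>
     \<rho> \<one>\<^bsub>G\<^esub> = 1\<^sub>m n \<and>
     inj_on \<rho> (carrier G)"

definition m_faithful :: "('a, 'b) monoid_scheme \<Rightarrow> nat" where
  "m_faithful G = (LEAST n. \<exists>\<rho>. faithful_rep G n \<rho>)"

definition maximal_abelian_subgroup :: "'a set \<Rightarrow> ('a, 'b) monoid_scheme \<Rightarrow> bool" where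
  "maximal_abelian_subgroup A H \<longleftrightarrow>
     subgroup A H \<and> comm_group (H\<lparr>carrier := A\<rparr>) \<and>
     (\<forall>B. subgroup B H \<and> comm_group (H\<lparr>carrier := B\<rparr>) \<and> A \<subseteq> B \<longrightarrow> B = A)"

end

theory Submission
  imports Defs
begin

text \<open>
  Let \<open>\<rho>\<close> be a faithful representation of the centre \<open>Z(H)\<close> of minimal dimension. The centre lies
  in every maximal abelian subgroup \<open>A\<close>, and \<open>\<rho>\<close> extends to a representation \<open>\<sigma>\<close> of \<open>A\<close> of the same
  dimension: decompose \<open>\<rho>\<close> along the characters of \<open>Z(H)\<close> and extend each character to \<open>A\<close>.
  Inducing \<open>\<sigma>\<close> from \<open>A\<close> to \<open>H\<close> gives a representation of dimension \<open>[H:A] \<cdot> m_faithful(Z(H))\<close>.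
  A central element in its kernel is fixed by conjugation, so it lies in the kernel of \<open>\<sigma>\<close>, i.e.\ of
  \<open>\<rho>\<close>, and is trivial. Thus the kernel is a normal subgroup meeting the centre trivially, and in a
  \<open>p\<close>-group this forces it to be trivial, by the class equation.
\<close>

definition representation :: "('a, 'b) monoid_scheme \<Rightarrow> nat \<Rightarrow> ('a \<Rightarrow> complex mat) \<Rightarrow> bool" where
  "representation G n \<rho> \<longleftrightarrow>
     (\<forall>g \<in> carrier G. \<rho> g \<in> carrier_mat n n) \<and>
     (\<forall>g \<in> carrier G. \<forall>h \<in> carrier G. \<rho> (g \<otimes>\<^bsub>G\<^esub> h) = \<rho> g * \<rho> h) \<and>
     \<rho> \<one>\<^bsub>G\<^esub> = 1\<^sub>m n"

lemma faithful_rep_iff: "faithful_rep G n \<rho> \<longleftrightarrow> representation G n \<rho> \<and> inj_on \<rho> (carrier G)"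
  unfolding faithful_rep_def representation_def by blast

lemma m_faithful_le: "faithful_rep G n \<rho> \<Longrightarrow> m_faithful G \<le> n"
  unfolding m_faithful_def by (rule Least_le) blast

lemma m_faithful_attained:
  assumes "faithful_rep G n \<rho>"
  obtains \<sigma> where "faithful_rep G (m_faithful G) \<sigma>"
  using LeastI_ex[of "\<lambda>n. \<exists>\<rho>. faithful_rep G n \<rho>"] assms unfolding m_faithful_def by blast

lemma representation_dim_0: "representation G 0 \<rho> \<Longrightarrow> g \<in> carrier G \<Longrightarrow> \<rho> g = 1\<^sub>m 0"
  unfolding representation_def by (intro eq_matI) auto

lemma (in group) representation_inv:
  assumes "representation G n \<rho>" "x \<in> carrier G"
  shows "\<rho> (inv x) * \<rho> x = 1\<^sub>m n"
  using assms unfolding representation_def by (metis inv_closed l_inv)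

lemma (in group) kernel_normal:
  assumes \<rho>: "representation G n \<rho>"
  shows "{x \<in> carrier G. \<rho> x = 1\<^sub>m n} \<lhd> G"
proof -
  have car: "\<And>g. g \<in> carrier G \<Longrightarrow> \<rho> g \<in> carrier_mat n n"
    and mult: "\<And>g h. g \<in> carrier G \<Longrightarrow> h \<in> carrier G \<Longrightarrow> \<rho> (g \<otimes> h) = \<rho> g * \<rho> h"
    and one: "\<rho> \<one> = 1\<^sub>m n"
    using \<rho> unfolding representation_def by auto
  have inv: "\<rho> (inv x) = 1\<^sub>m n" if "x \<in> carrier G" "\<rho> x = 1\<^sub>m n" for x
    using representation_inv[OF \<rho> that(1)] that car[of "inv x"] by simp
  show ?thesis
    unfolding normal_inv_iff
  proof (intro conjI ballI subgroupI)
    fix g x assume g: "g \<in> carrier G" and x: "x \<in> {x \<in> carrier G. \<rho> x = 1\<^sub>m n}"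
    have "\<rho> (g \<otimes> x \<otimes> inv g) = \<rho> g * \<rho> (inv g)"
      using x g car[OF g] by (simp add: mult)
    also have "\<dots> = 1\<^sub>m n" using g one by (simp flip: mult)
    finally show "g \<otimes> x \<otimes> inv g \<in> {x \<in> carrier G. \<rho> x = 1\<^sub>m n}" using g x by simp
  qed (use one inv mult in auto)
qed

lemma (in group) faithful_repI_kernel:
  assumes \<rho>: "representation G n \<rho>" and ker: "{x \<in> carrier G. \<rho> x = 1\<^sub>m n} = {\<one>}"
  shows "faithful_rep G n \<rho>"
  unfolding faithful_rep_iff
proof (intro conjI \<rho> inj_onI)
  fix x y assume x: "x \<in> carrier G" and y: "y \<in> carrier G" and e: "\<rho> x = \<rho> y"
  have "\<rho> (x \<otimes> inv y) = \<rho> y * \<rho> (inv y)"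
    using \<rho> x y e unfolding representation_def by simp
  also have "\<dots> = 1\<^sub>m n"
    using \<rho> y unfolding representation_def by (metis inv_closed r_inv)
  finally have "x \<otimes> inv y = \<one>" using ker x y by blast
  then show "x = y" using x y by (metis inv_equality inv_inv r_inv inv_closed)
qed

section \<open>Centres and maximal abelian subgroups\<close>

lemma (in group) finite_subgroupI:
  assumes fin: "finite (carrier G)" and S: "S \<subseteq> carrier G" "S \<noteq> {}"
    and closed: "\<And>x y. x \<in> S \<Longrightarrow> y \<in> S \<Longrightarrow> x \<otimes> y \<in> S"
  shows "subgroup S G"
proof (rule subgroupI[OF S _ closed])
  fix x assume x: "x \<in> S"
  then have xG: "x \<in> carrier G" using S(1) by auto
  have pow: "x [^] Suc n \<in> S" for n
    by (induction n) (use x xG closed in auto)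
  have "ord x \<ge> 1" using ord_ge_1[OF fin xG] .
  then have "Suc (Suc (2 * ord x - 2)) = ord x * 2" by simp
  then have "x [^] Suc (2 * ord x - 2) \<otimes> x = x [^] (ord x * 2)"
    by (metis nat_pow_Suc)
  also have "\<dots> = \<one>" using xG by (simp add: nat_pow_pow[symmetric])
  finally have "inv x = x [^] Suc (2 * ord x - 2)" using xG by (metis inv_equality nat_pow_closed)
  then show "inv x \<in> S" using pow by simp
qed

lemma (in group) subgroup_group_center: "subgroup (group_center G) G"
proof (rule subgroupI)
  show "group_center G \<subseteq> carrier G" "group_center G \<noteq> {}"
    unfolding group_center_def by auto
next
  fix z assume "z \<in> group_center G"
  then have z: "z \<in> carrier G" "\<And>g. g \<in> carrier G \<Longrightarrow> z \<otimes> g = g \<otimes> z"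
    unfolding group_center_def by auto
  have "inv z \<otimes> g = g \<otimes> inv z" if g: "g \<in> carrier G" for g
  proof -
    have "inv z \<otimes> g = inv z \<otimes> (g \<otimes> z) \<otimes> inv z" using z(1) g by (simp add: m_assoc)
    also have "\<dots> = inv z \<otimes> (z \<otimes> g) \<otimes> inv z" by (simp only: z(2)[OF g])
    also have "\<dots> = g \<otimes> inv z" using z(1) g by (simp add: m_assoc[symmetric])
    finally show ?thesis .
  qed
  then show "inv z \<in> group_center G" using z(1) unfolding group_center_def by simp
next
  fix z w assume "z \<in> group_center G" "w \<in> group_center G"
  then have z: "z \<in> carrier G" "\<And>g. g \<in> carrier G \<Longrightarrow> z \<otimes> g = g \<otimes> z"
    and w: "w \<in> carrier G" "\<And>g. g \<in> carrier G \<Longrightarrow> w \<otimes> g = g \<otimes> w"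
    unfolding group_center_def by auto
  have "z \<otimes> w \<otimes> g = g \<otimes> (z \<otimes> w)" if g: "g \<in> carrier G" for g
  proof -
    have "z \<otimes> w \<otimes> g = z \<otimes> (g \<otimes> w)" using z(1) w(1) g by (simp add: m_assoc w(2)[OF g])
    also have "\<dots> = (g \<otimes> z) \<otimes> w" using z(1) w(1) g by (simp add: m_assoc flip: z(2)[OF g])
    also have "\<dots> = g \<otimes> (z \<otimes> w)" using z(1) w(1) g by (simp add: m_assoc)
    finally show ?thesis .
  qed
  then show "z \<otimes> w \<in> group_center G" using z(1) w(1) unfolding group_center_def by simp
qed

lemma (in group) mult_group_center_mult:
  assumes "a \<in> carrier G" "z \<in> group_center G" "a' \<in> carrier G" "z' \<in> group_center G"
  shows "(a \<otimes> z) \<otimes> (a' \<otimes> z') = (a \<otimes> a') \<otimes> (z \<otimes> z')"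
proof -
  have zG: "z \<in> carrier G" "z' \<in> carrier G" and "z \<otimes> a' = a' \<otimes> z"
    using assms unfolding group_center_def by auto
  have "(a \<otimes> z) \<otimes> (a' \<otimes> z') = a \<otimes> (z \<otimes> a') \<otimes> z'" using assms(1,3) zG by (simp add: m_assoc)
  also have "\<dots> = a \<otimes> (a' \<otimes> z) \<otimes> z'" by (simp only: \<open>z \<otimes> a' = a' \<otimes> z\<close>)
  also have "\<dots> = (a \<otimes> a') \<otimes> (z \<otimes> z')" using assms(1,3) zG by (simp add: m_assoc)
  finally show ?thesis .
qed

lemma (in group) abelian_subgroup_mult_group_center:
  assumes fin: "finite (carrier G)" and A: "subgroup A G" "comm_group (G\<lparr>carrier := A\<rparr>)"
  defines "B \<equiv> {a \<otimes> z | a z. a \<in> A \<and> z \<in> group_center G}"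
  shows "subgroup B G" "comm_group (G\<lparr>carrier := B\<rparr>)"
proof -
  let ?Z = "group_center G"
  have Z: "subgroup ?Z G" by (rule subgroup_group_center)
  have AG: "\<And>a. a \<in> A \<Longrightarrow> a \<in> carrier G" and ZG: "\<And>z. z \<in> ?Z \<Longrightarrow> z \<in> carrier G"
    using subgroup.mem_carrier[OF A(1)] subgroup.mem_carrier[OF Z] by blast+
  note mult = mult_group_center_mult[OF AG _ AG]
  show "subgroup B G"
  proof (rule finite_subgroupI[OF fin])
    show "B \<subseteq> carrier G" unfolding B_def using AG ZG by auto
    show "B \<noteq> {}" unfolding B_def using subgroup.one_closed[OF A(1)] subgroup.one_closed[OF Z] by auto
    fix x y assume "x \<in> B" "y \<in> B"
    then obtain a z a' z' where h: "a \<in> A" "z \<in> ?Z" "a' \<in> A" "z' \<in> ?Z" "x = a \<otimes> z" "y = a' \<otimes> z'"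
      unfolding B_def by auto
    have "x \<otimes> y = (a \<otimes> a') \<otimes> (z \<otimes> z')" "a \<otimes> a' \<in> A" "z \<otimes> z' \<in> ?Z"
      using mult h subgroup.m_closed[OF A(1)] subgroup.m_closed[OF Z] by auto
    then show "x \<otimes> y \<in> B" unfolding B_def by blast
  qed
  show "comm_group (G\<lparr>carrier := B\<rparr>)"
  proof (rule group.group_comm_groupI[OF subgroup.subgroup_is_group[OF \<open>subgroup B G\<close> is_group]])
    fix x y assume "x \<in> carrier (G\<lparr>carrier := B\<rparr>)" "y \<in> carrier (G\<lparr>carrier := B\<rparr>)"
    then obtain a z a' z' where h: "a \<in> A" "z \<in> ?Z" "a' \<in> A" "z' \<in> ?Z" "x = a \<otimes> z" "y = a' \<otimes> z'"
      unfolding B_def by auto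
    have "a \<otimes> a' = a' \<otimes> a"
      using comm_monoid.m_comm[OF comm_group.axioms(1)[OF A(2)], of a a'] h by simp
    moreover have "z \<otimes> z' = z' \<otimes> z" using h(2) ZG[OF h(4)] unfolding group_center_def by blast
    ultimately have "x \<otimes> y = (a' \<otimes> a) \<otimes> (z' \<otimes> z)" using mult h by simp
    also have "\<dots> = y \<otimes> x" using mult h by simp
    finally show "x \<otimes>\<^bsub>G\<lparr>carrier := B\<rparr>\<^esub> y = y \<otimes>\<^bsub>G\<lparr>carrier := B\<rparr>\<^esub> x" by simp
  qed
qed

lemma (in group) group_center_subset_maximal_abelian:
  assumes fin: "finite (carrier G)" and A: "maximal_abelian_subgroup A G"
  shows "group_center G \<subseteq> A"
proof -
  let ?Z = "group_center G"
  define B where "B = {a \<otimes> z | a z. a \<in> A \<and> z \<in> ?Z}"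
  have As: "subgroup A G" "comm_group (G\<lparr>carrier := A\<rparr>)"
    using A unfolding maximal_abelian_subgroup_def by blast+
  have one: "\<one> \<in> A" "\<one> \<in> ?Z" using subgroup.one_closed[OF As(1)] subgroup.one_closed[OF subgroup_group_center] by auto
  have "a \<in> B" if "a \<in> A" for a
  proof -
    have "a = a \<otimes> \<one>" using subgroup.mem_carrier[OF As(1) that] by simp
    then show ?thesis unfolding B_def using that one by blast
  qed
  then have "B = A"
    using A abelian_subgroup_mult_group_center[OF fin As] unfolding maximal_abelian_subgroup_def B_def by blast
  moreover have "z \<in> B" if "z \<in> ?Z" for z
  proof -
    have "z = \<one> \<otimes> z" using subgroup.mem_carrier[OF subgroup_group_center that] by simp
    then show ?thesis unfolding B_def using that one by blast
  qed
  ultimately show ?thesis by blast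
qed

section \<open>Normal subgroups of \<open>p\<close>-groups\<close>

lemma prime_dvd_if_dvd_prime_power:
  fixes p d k :: nat
  assumes "Factorial_Ring.prime p" "d dvd p ^ k" "d \<noteq> 1"
  shows "p dvd d"
proof -
  obtain i where "i \<le> k" "d = p ^ i" using divides_primepow_nat[OF assms(1)] assms(2) by auto
  with assms(3) show ?thesis by (cases i) auto
qed

lemma (in group_action) orbit_eq_if_mem_orbit:
  assumes x: "x \<in> E" and y: "y \<in> orbit G \<phi> x"
  shows "orbit G \<phi> y = orbit G \<phi> x"
proof -
  have "y \<in> E" using x y element_image unfolding orbit_def by blast
  then have "orbit G \<phi> x \<in> orbits G E \<phi>" "orbit G \<phi> y \<in> orbits G E \<phi>" "y \<in> orbit G \<phi> y"
    using x orbit_refl unfolding orbits_def by auto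
  then show ?thesis using disjoint_union y by blast
qed

lemma (in group_action) non_fixed_points_Union_orbits:
  assumes S: "S \<subseteq> E" "\<And>x. x \<in> S \<Longrightarrow> orbit G \<phi> x \<subseteq> S"
  defines "T \<equiv> {x \<in> S. orbit G \<phi> x \<noteq> {x}}"
  shows "T = \<Union> (orbit G \<phi> ` T)"
proof
  show "T \<subseteq> \<Union> (orbit G \<phi> ` T)" using S(1) orbit_refl unfolding T_def by blast
  show "\<Union> (orbit G \<phi> ` T) \<subseteq> T"
  proof
    fix y assume "y \<in> \<Union> (orbit G \<phi> ` T)"
    then obtain x where x: "x \<in> S" "orbit G \<phi> x \<noteq> {x}" and y: "y \<in> orbit G \<phi> x"
      unfolding T_def by blast
    have "orbit G \<phi> y = orbit G \<phi> x" using orbit_eq_if_mem_orbit x(1) S(1) y by blast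
    moreover have "x \<in> orbit G \<phi> x" using x(1) S(1) orbit_refl by blast
    ultimately show "y \<in> T" using x y S(2) unfolding T_def by auto
  qed
qed

lemma (in group_action) prime_dvd_card_non_fixed_points:
  assumes fin: "finite S" and S: "S \<subseteq> E" "\<And>x. x \<in> S \<Longrightarrow> orbit G \<phi> x \<subseteq> S"
    and p: "Factorial_Ring.prime p" and order: "order G = p ^ k"
  shows "p dvd card {x \<in> S. orbit G \<phi> x \<noteq> {x}}"
proof -
  let ?T = "{x \<in> S. orbit G \<phi> x \<noteq> {x}}"
  have "pairwise disjnt (orbit G \<phi> ` ?T)"
  proof (rule pairwiseI)
    fix O1 O2 assume O: "O1 \<in> orbit G \<phi> ` ?T" "O2 \<in> orbit G \<phi> ` ?T" "O1 \<noteq> O2"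
    then obtain x1 x2 where "x1 \<in> E" "x2 \<in> E" "O1 = orbit G \<phi> x1" "O2 = orbit G \<phi> x2"
      using S(1) by blast
    then show "disjnt O1 O2" using orbit_eq_if_mem_orbit O(3) unfolding disjnt_def by blast
  qed
  moreover have "finite Orb" if "Orb \<in> orbit G \<phi> ` ?T" for Orb
    using that S(2) fin finite_subset by blast
  ultimately have "card (\<Union> (orbit G \<phi> ` ?T)) = (\<Sum>Orb \<in> orbit G \<phi> ` ?T. card Orb)"
    by (rule card_Union_disjoint)
  then have "card ?T = (\<Sum>Orb \<in> orbit G \<phi> ` ?T. card Orb)"
    using non_fixed_points_Union_orbits[OF S] by metis
  moreover have "p dvd card (orbit G \<phi> x)" if x: "x \<in> ?T" for x
  proof (rule prime_dvd_if_dvd_prime_power[OF p])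
    have "x \<in> E" using x S(1) by auto
    then show "card (orbit G \<phi> x) dvd p ^ k"
      using orbit_stabilizer_theorem order by (metis dvd_triv_left)
    have "x \<in> orbit G \<phi> x" using \<open>x \<in> E\<close> orbit_refl by blast
    then show "card (orbit G \<phi> x) \<noteq> 1" using x by (auto simp: card_1_singleton_iff)
  qed
  ultimately show ?thesis by (metis (no_types, lifting) dvd_sum imageE)
qed

lemma (in group) conjugation_orbit:
  assumes x: "x \<in> carrier G"
  shows "orbit G (\<lambda>g. \<lambda>h \<in> carrier G. g \<otimes> h \<otimes> inv g) x = {g \<otimes> x \<otimes> inv g | g. g \<in> carrier G}"
  using x unfolding orbit_def by auto

lemma (in group) conjugation_orbit_eq_singleton_iff:
  assumes x: "x \<in> carrier G"
  shows "orbit G (\<lambda>g. \<lambda>h \<in> carrier G. g \<otimes> h \<otimes> inv g) x = {x} \<longleftrightarrow> x \<in> group_center G"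
proof
  assume fixed: "orbit G (\<lambda>g. \<lambda>h \<in> carrier G. g \<otimes> h \<otimes> inv g) x = {x}"
  have "x \<otimes> g = g \<otimes> x" if g: "g \<in> carrier G" for g
  proof -
    have "g \<otimes> x \<otimes> inv g = x" using fixed conjugation_orbit[OF x] g by blast
    then have "g \<otimes> x \<otimes> inv g \<otimes> g = x \<otimes> g" by simp
    then show ?thesis using g x by (simp add: m_assoc)
  qed
  then show "x \<in> group_center G" using x unfolding group_center_def by simp
next
  assume "x \<in> group_center G"
  then have "g \<otimes> x = x \<otimes> g" if "g \<in> carrier G" for g
    using that unfolding group_center_def by simp
  then have "g \<otimes> x \<otimes> inv g = x" if "g \<in> carrier G" for g
    using that x by (simp add: m_assoc)
  then show "orbit G (\<lambda>g. \<lambda>h \<in> carrier G. g \<otimes> h \<otimes> inv g) x = {x}"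
    unfolding conjugation_orbit[OF x] by force
qed

text \<open>The class equation for the conjugation action on \<open>N\<close>: the non-central part of \<open>N\<close> has order
  divisible by \<open>p\<close>, and so has \<open>N\<close>.\<close>
lemma (in group) normal_subgroup_inter_center_nontrivial:
  assumes p: "Factorial_Ring.prime p" and order: "order G = p ^ k"
    and N: "N \<lhd> G" "N \<noteq> {\<one>}"
  shows "N \<inter> group_center G \<noteq> {\<one>}"
proof
  assume trivial: "N \<inter> group_center G = {\<one>}"
  let ?\<phi> = "\<lambda>g. \<lambda>h \<in> carrier G. g \<otimes> h \<otimes> inv g"
  interpret conj: group_action G "carrier G" ?\<phi> by (rule action_by_conjugation)
  have Ns: "subgroup N G" and Nconj: "\<And>g x. g \<in> carrier G \<Longrightarrow> x \<in> N \<Longrightarrow> g \<otimes> x \<otimes> inv g \<in> N"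
    using N(1) unfolding normal_inv_iff by auto
  have NG: "N \<subseteq> carrier G" using subgroup.subset[OF Ns] .
  have "card (carrier G) > 0" using order p prime_gt_0_nat unfolding order_def by simp
  then have "finite (carrier G)" by (rule card_ge_0_finite)
  then have finN: "finite N" using NG finite_subset by blast
  have "orbit G ?\<phi> x \<subseteq> N" if "x \<in> N" for x
    using conjugation_orbit[OF subsetD[OF NG that]] that Nconj by auto
  then have "p dvd card {x \<in> N. orbit G ?\<phi> x \<noteq> {x}}"
    by (rule conj.prime_dvd_card_non_fixed_points[OF finN NG _ p order])
  also have "{x \<in> N. orbit G ?\<phi> x \<noteq> {x}} = N - {\<one>}"
    using conjugation_orbit_eq_singleton_iff NG trivial by auto
  finally have "p dvd card N - 1"
    using finN subgroup.one_closed[OF Ns] by simp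
  moreover have "p dvd card N"
  proof (rule prime_dvd_if_dvd_prime_power[OF p])
    show "card N dvd p ^ k" using lagrange[OF Ns] order by (metis dvd_triv_right)
    show "card N \<noteq> 1"
      using N(2) subgroup.one_closed[OF Ns] card_1_singletonE by auto
  qed
  ultimately have "p dvd card N - (card N - 1)" by (rule dvd_diff_nat[rotated])
  then have "p dvd 1"
    using subgroup.finite_imp_card_positive[OF Ns \<open>finite (carrier G)\<close>] by simp
  then show False using p by simp
qed


lemma (in group) pgroup_faithful_repI_center:
  assumes p: "Factorial_Ring.prime p" and order: "order G = p ^ k"
    and \<pi>: "representation G n \<pi>"
    and center: "\<And>z. z \<in> group_center G \<Longrightarrow> \<pi> z = 1\<^sub>m n \<Longrightarrow> z = \<one>"
  shows "faithful_rep G n \<pi>"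
proof (rule faithful_repI_kernel[OF \<pi>])
  let ?N = "{x \<in> carrier G. \<pi> x = 1\<^sub>m n}"
  have "\<pi> \<one> = 1\<^sub>m n" using \<pi> unfolding representation_def by blast
  then have "?N \<inter> group_center G = {\<one>}"
    using center subgroup.one_closed[OF subgroup_group_center] by blast
  then show "?N = {\<one>}"
    using normal_subgroup_inter_center_nontrivial[OF p order kernel_normal[OF \<pi>]] by blast
qed

section \<open>Characters of finite abelian groups\<close>

definition is_character :: "('a, 'b) monoid_scheme \<Rightarrow> 'a set \<Rightarrow> ('a \<Rightarrow> complex) \<Rightarrow> bool" where
  "is_character G B \<chi> \<longleftrightarrow> \<chi> \<one>\<^bsub>G\<^esub> = 1 \<and> (\<forall>x \<in> B. \<forall>y \<in> B. \<chi> (x \<otimes>\<^bsub>G\<^esub> y) = \<chi> x * \<chi> y)"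

definition relative_order :: "('a, 'b) monoid_scheme \<Rightarrow> 'a set \<Rightarrow> 'a \<Rightarrow> nat" where
  "relative_order G B a = (LEAST n. 0 < n \<and> a [^]\<^bsub>G\<^esub> n \<in> B)"

lemma (in group) subgroup_nat_pow_closed: "subgroup B G \<Longrightarrow> x \<in> B \<Longrightarrow> x [^] (k::nat) \<in> B"
  by (metis subgroup_int_pow_closed int_pow_int)

lemma (in group) character_nat_pow:
  assumes B: "subgroup B G" and \<chi>: "is_character G B \<chi>" and x: "x \<in> B"
  shows "\<chi> (x [^] (k::nat)) = \<chi> x ^ k"
proof (induction k)
  case 0
  then show ?case using \<chi> unfolding is_character_def by simp
next
  case (Suc k)
  have "\<chi> (x [^] k \<otimes> x) = \<chi> (x [^] k) * \<chi> x"
    using \<chi> x subgroup_nat_pow_closed[OF B x] unfolding is_character_def by blast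
  then show ?case using Suc by simp
qed

lemma (in group) character_inv_mult:
  assumes B: "subgroup B G" and \<chi>: "is_character G B \<chi>" and x: "x \<in> B"
  shows "\<chi> (inv x) * \<chi> x = 1"
proof -
  have "\<chi> (inv x \<otimes> x) = \<chi> (inv x) * \<chi> x"
    using \<chi> x subgroup.m_inv_closed[OF B x] unfolding is_character_def by blast
  then show ?thesis using \<chi> subgroup.mem_carrier[OF B x] unfolding is_character_def by simp
qed

lemma (in group) relative_order:
  assumes fin: "finite (carrier G)" and B: "subgroup B G" and a: "a \<in> carrier G"
  shows "0 < relative_order G B a \<and> a [^] relative_order G B a \<in> B"
proof -
  have "0 < ord a \<and> a [^] ord a \<in> B" using ord_ge_1[OF fin a] subgroup.one_closed[OF B] a by simp
  then show ?thesis unfolding relative_order_def by (rule LeastI)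
qed

lemma (in group) relative_order_dvd:
  assumes fin: "finite (carrier G)" and B: "subgroup B G" and a: "a \<in> carrier G"
    and k: "a [^] (k::nat) \<in> B"
  shows "relative_order G B a dvd k"
proof -
  define n where "n = relative_order G B a"
  have n: "0 < n" "a [^] n \<in> B" using relative_order[OF fin B a] unfolding n_def by blast+
  have "a [^] k = a [^] (n * (k div n) + k mod n)" by simp
  also have "\<dots> = (a [^] n) [^] (k div n) \<otimes> a [^] (k mod n)"
    using a by (simp only: nat_pow_pow nat_pow_mult)
  finally have "a [^] (k mod n) = inv ((a [^] n) [^] (k div n)) \<otimes> a [^] k"
    using a by (simp add: m_assoc[symmetric])
  then have "a [^] (k mod n) \<in> B"
    using subgroup.m_closed[OF B] subgroup.m_inv_closed[OF B] subgroup_nat_pow_closed[OF B n(2)] k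
    by simp
  moreover have "k mod n < n" using n(1) by simp
  ultimately have "\<not> 0 < k mod n"
    using not_less_Least[of "k mod n" "\<lambda>n. 0 < n \<and> a [^] n \<in> B"] unfolding n_def relative_order_def
    by auto
  then show ?thesis using n_def by auto
qed

context comm_group
begin

definition adjoin :: "'a set \<Rightarrow> 'a \<Rightarrow> 'a set" where
  "adjoin B a = {b \<otimes> a [^] (i::nat) | b i. b \<in> B}"

lemma adjoin_mult:
  assumes B: "subgroup B G" and a: "a \<in> carrier G" and b: "b \<in> B" "b' \<in> B"
  shows "(b \<otimes> a [^] (i::nat)) \<otimes> (b' \<otimes> a [^] (j::nat)) = (b \<otimes> b') \<otimes> a [^] (i + j)"
proof -
  have "b \<in> carrier G" "b' \<in> carrier G" using b subgroup.mem_carrier[OF B] by auto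
  then have "(b \<otimes> a [^] i) \<otimes> (b' \<otimes> a [^] j) = (b \<otimes> b') \<otimes> (a [^] i \<otimes> a [^] j)"
    using a by (simp add: m_ac)
  then show ?thesis using a by (simp add: nat_pow_mult)
qed

lemma adjoin_subgroup:
  assumes fin: "finite (carrier G)" and B: "subgroup B G" and a: "a \<in> carrier G"
  shows "subgroup (adjoin B a) G"
proof (rule finite_subgroupI[OF fin])
  show "adjoin B a \<subseteq> carrier G" unfolding adjoin_def using a subgroup.mem_carrier[OF B] by auto
  have "\<one> = \<one> \<otimes> a [^] (0::nat)" by simp
  then show "adjoin B a \<noteq> {}" unfolding adjoin_def using subgroup.one_closed[OF B] by blast
  fix x y assume "x \<in> adjoin B a" "y \<in> adjoin B a"
  then obtain b i b' j where "b \<in> B" "b' \<in> B" "x = b \<otimes> a [^] (i::nat)" "y = b' \<otimes> a [^] (j::nat)"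
    unfolding adjoin_def by auto
  moreover from this have "x \<otimes> y = (b \<otimes> b') \<otimes> a [^] (i + j)" "b \<otimes> b' \<in> B"
    using adjoin_mult[OF B a] subgroup.m_closed[OF B] by auto
  ultimately show "x \<otimes> y \<in> adjoin B a" unfolding adjoin_def by blast
qed

lemma subset_adjoin:
  assumes "subgroup B G" shows "B \<subseteq> adjoin B a"
proof
  fix b assume "b \<in> B"
  then have "b = b \<otimes> a [^] (0::nat)" using subgroup.mem_carrier[OF assms] by simp
  then show "b \<in> adjoin B a" unfolding adjoin_def using \<open>b \<in> B\<close> by blast
qed

lemma mem_adjoin:
  assumes "subgroup B G" "a \<in> carrier G" shows "a \<in> adjoin B a"
proof -
  have "a = \<one> \<otimes> a [^] (1::nat)" using assms(2) by simp
  then show ?thesis unfolding adjoin_def using subgroup.one_closed[OF assms(1)] by blast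
qed


lemma character_adjoin_well_defined_le:
  assumes fin: "finite (carrier G)" and B: "subgroup B G" and a: "a \<in> carrier G"
    and \<chi>: "is_character G B \<chi>"
    and c: "c ^ relative_order G B a = \<chi> (a [^] relative_order G B a)"
    and b: "b \<in> B" "b' \<in> B" and eq: "b \<otimes> a [^] (i::nat) = b' \<otimes> a [^] (j::nat)" and ij: "i \<le> j"
  shows "\<chi> b * c ^ i = \<chi> b' * c ^ j"
proof -
  let ?n = "relative_order G B a"
  have bG: "b \<in> carrier G" "b' \<in> carrier G" using subgroup.mem_carrier[OF B] b by auto
  have "b \<otimes> a [^] i = (b' \<otimes> a [^] (j - i)) \<otimes> a [^] i"
    using eq bG a ij by (simp add: m_assoc nat_pow_mult)
  then have b_eq: "b = b' \<otimes> a [^] (j - i)" using bG a r_cancel by (meson m_closed nat_pow_closed)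
  then have "a [^] (j - i) = inv b' \<otimes> b" using bG a by (simp add: m_assoc[symmetric])
  then have inB: "a [^] (j - i) \<in> B"
    using subgroup.m_closed[OF B] subgroup.m_inv_closed[OF B] b by simp
  then obtain q where q: "j - i = ?n * q" using relative_order_dvd[OF fin B a] by blast
  have an: "a [^] ?n \<in> B" using relative_order[OF fin B a] by blast
  have "\<chi> b = \<chi> b' * \<chi> (a [^] (j - i))" using b_eq \<chi> inB b unfolding is_character_def by simp
  also have "a [^] (j - i) = (a [^] ?n) [^] q" using q a by (simp add: nat_pow_pow)
  also have "\<chi> ((a [^] ?n) [^] q) = c ^ (j - i)"
    using character_nat_pow[OF B \<chi> an] c q by (simp add: power_mult)
  finally have "\<chi> b * c ^ i = \<chi> b' * (c ^ (j - i) * c ^ i)" by simp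
  also have "c ^ (j - i) * c ^ i = c ^ j" using ij by (simp flip: power_add)
  finally show ?thesis .
qed

lemma character_adjoin_well_defined:
  assumes fin: "finite (carrier G)" and B: "subgroup B G" and a: "a \<in> carrier G"
    and \<chi>: "is_character G B \<chi>"
    and c: "c ^ relative_order G B a = \<chi> (a [^] relative_order G B a)"
    and b: "b \<in> B" "b' \<in> B" and eq: "b \<otimes> a [^] (i::nat) = b' \<otimes> a [^] (j::nat)"
  shows "\<chi> b * c ^ i = \<chi> b' * c ^ j"
proof (cases "i \<le> j")
  case True
  then show ?thesis using character_adjoin_well_defined_le[OF fin B a \<chi> c b eq] by simp
next
  case False
  then show ?thesis using character_adjoin_well_defined_le[OF fin B a \<chi> c b(2,1) eq[symmetric]] by simp
qed

lemma character_adjoin: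
  assumes fin: "finite (carrier G)" and B: "subgroup B G" and a: "a \<in> carrier G"
    and \<chi>: "is_character G B \<chi>"
    and c: "c ^ relative_order G B a = \<chi> (a [^] relative_order G B a)"
  obtains \<psi> where "is_character G (adjoin B a) \<psi>" "\<And>b. b \<in> B \<Longrightarrow> \<psi> b = \<chi> b" "\<psi> a = c"
proof -
  define \<psi> where "\<psi> x = (SOME v. \<exists>b \<in> B. \<exists>i::nat. x = b \<otimes> a [^] i \<and> v = \<chi> b * c ^ i)" for x
  have \<psi>: "\<psi> (b \<otimes> a [^] i) = \<chi> b * c ^ i" if "b \<in> B" for b i
  proof -
    let ?P = "\<lambda>v. \<exists>b' \<in> B. \<exists>j::nat. b \<otimes> a [^] i = b' \<otimes> a [^] j \<and> v = \<chi> b' * c ^ j"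
    have "?P (\<chi> b * c ^ i)" using that by blast
    then have "?P (\<psi> (b \<otimes> a [^] i))" unfolding \<psi>_def by (rule someI)
    then show ?thesis using character_adjoin_well_defined[OF fin B a \<chi> c that] by auto
  qed
  have \<chi>_one: "\<chi> \<one> = 1" using \<chi> unfolding is_character_def by simp
  have one: "\<one> \<in> B" using subgroup.one_closed[OF B] .
  have "is_character G (adjoin B a) \<psi>"
    unfolding is_character_def
  proof (intro conjI ballI)
    show "\<psi> \<one> = 1" using \<psi>[OF one, of 0] \<chi>_one by simp
    fix x y assume "x \<in> adjoin B a" "y \<in> adjoin B a"
    then obtain b i b' j where b: "b \<in> B" "b' \<in> B" "x = b \<otimes> a [^] (i::nat)" "y = b' \<otimes> a [^] (j::nat)"
      unfolding adjoin_def by auto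
    have "\<psi> (x \<otimes> y) = \<chi> (b \<otimes> b') * c ^ (i + j)"
      using b adjoin_mult[OF B a] \<psi> subgroup.m_closed[OF B] by simp
    also have "\<dots> = (\<chi> b * c ^ i) * (\<chi> b' * c ^ j)"
      using \<chi> b unfolding is_character_def by (simp add: power_add)
    finally show "\<psi> (x \<otimes> y) = \<psi> x * \<psi> y" using \<psi> b by simp
  qed
  moreover have "\<psi> b = \<chi> b" if "b \<in> B" for b
    using \<psi>[OF that, of 0] that subgroup.mem_carrier[OF B] by simp
  moreover have "\<psi> a = c" using \<psi>[OF one, of 1] \<chi>_one a by simp
  ultimately show ?thesis using that by blast
qed

lemma exists_nth_root:
  assumes "0 < n" shows "\<exists>c::complex. c ^ n = w"
proof (cases "w = 0")
  case True
  then show ?thesis using assms by (intro exI[of _ 0]) simp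
next
  case False
  then have "card {c::complex. c ^ n = w} \<noteq> 0" using card_nth_roots assms by simp
  then show ?thesis by (metis (mono_tags, lifting) card.empty empty_Collect_eq)
qed

lemma character_extension:
  assumes fin: "finite (carrier G)"
  shows "subgroup B G \<Longrightarrow> is_character G B \<chi> \<Longrightarrow>
    \<exists>\<psi>. is_character G (carrier G) \<psi> \<and> (\<forall>b \<in> B. \<psi> b = \<chi> b)"
proof (induction "card (carrier G - B)" arbitrary: B \<chi> rule: less_induct)
  case less
  show ?case
  proof (cases "carrier G - B = {}")
    case True
    then have "B = carrier G" using subgroup.subset[OF less.prems(1)] by auto
    then show ?thesis using less.prems by blast
  next
    case False
    then obtain a where a: "a \<in> carrier G" "a \<notin> B" by auto
    let ?n = "relative_order G B a"
    have "\<chi> (a [^] ?n) \<noteq> 0"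
      using character_inv_mult[OF less.prems] relative_order[OF fin less.prems(1) a(1)]
      by (metis mult_zero_right zero_neq_one)
    then obtain c where "c ^ ?n = \<chi> (a [^] ?n)"
      using exists_nth_root relative_order[OF fin less.prems(1) a(1)] by blast
    then obtain \<psi> where \<psi>: "is_character G (adjoin B a) \<psi>" "\<And>b. b \<in> B \<Longrightarrow> \<psi> b = \<chi> b"
      using character_adjoin[OF fin less.prems(1) a(1) less.prems(2)] by blast
    have "carrier G - adjoin B a \<subset> carrier G - B"
      using subset_adjoin[OF less.prems(1)] mem_adjoin[OF less.prems(1) a(1)] a by blast
    then have "card (carrier G - adjoin B a) < card (carrier G - B)"
      using fin by (meson finite_Diff psubset_card_mono)
    then obtain \<psi>' where "is_character G (carrier G) \<psi>'" "\<forall>b \<in> adjoin B a. \<psi>' b = \<psi> b"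
      using less.hyps adjoin_subgroup[OF fin less.prems(1) a(1)] \<psi>(1) by blast
    then show ?thesis using \<psi>(2) subset_adjoin[OF less.prems(1), of a] by (metis subsetD)
  qed
qed

lemma character_separation:
  assumes fin: "finite (carrier G)" and z: "z \<in> carrier G" "z \<noteq> \<one>"
  obtains \<psi> where "is_character G (carrier G) \<psi>" "\<psi> z \<noteq> 1"
proof -
  have B: "subgroup {\<one>} G" by (rule triv_subgroup)
  have \<chi>: "is_character G {\<one>} (\<lambda>_. 1)" unfolding is_character_def by simp
  let ?n = "relative_order G {\<one>} z"
  have n: "0 < ?n" "z [^] ?n = \<one>" using relative_order[OF fin B z(1)] by auto
  have "?n \<noteq> 1"
  proof
    assume "?n = 1"
    then have "z [^] ?n = z" using z(1) by simp
    then show False using n(2) z(2) by simp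
  qed
  then have "card {c::complex. c ^ ?n = 1} > 1" using n(1) by (simp add: card_roots_unity_eq)
  then have "\<not> {c::complex. c ^ ?n = 1} \<subseteq> {1}"
    using card_mono[of "{1::complex}" "{c. c ^ ?n = 1}"] by auto
  then obtain c :: complex where c: "c ^ ?n = 1" "c \<noteq> 1" by blast
  obtain \<psi> where \<psi>: "is_character G (adjoin {\<one>} z) \<psi>" "\<psi> z = c"
    using character_adjoin[OF fin B z(1) \<chi>, of c] c(1) by auto
  obtain \<psi>' where \<psi>': "is_character G (carrier G) \<psi>'" "\<forall>b \<in> adjoin {\<one>} z. \<psi>' b = \<psi> b"
    using character_extension[OF fin adjoin_subgroup[OF fin B z(1)] \<psi>(1)] by blast
  have "\<psi>' z \<noteq> 1" using \<psi>'(2) mem_adjoin[OF B z(1)] \<psi>(2) c(2) by simp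
  then show ?thesis using that \<psi>'(1) by blast
qed

end


section \<open>Extending representations from a subgroup of a finite abelian group\<close>

lemma (in comm_group) subgroup_comm_group:
  assumes "subgroup Z G" shows "comm_group (G\<lparr>carrier := Z\<rparr>)"
  by (rule group.group_comm_groupI[OF subgroup.subgroup_is_group[OF assms is_group]])
     (use subgroup.mem_carrier[OF assms] m_comm in simp)

locale abelian_extension = comm_group G for G (structure) +
  fixes Z :: "'a set" and \<rho> :: "'a \<Rightarrow> complex mat" and m :: nat
  assumes fin: "finite (carrier G)" and Z: "subgroup Z G"
    and \<rho>: "representation (G\<lparr>carrier := Z\<rparr>) m \<rho>"
begin

lemma ZG: "z \<in> Z \<Longrightarrow> z \<in> carrier G" using subgroup.mem_carrier[OF Z] .
lemma one_Z: "\<one> \<in> Z" using subgroup.one_closed[OF Z] .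
lemma mult_Z: "x \<in> Z \<Longrightarrow> y \<in> Z \<Longrightarrow> x \<otimes> y \<in> Z" using subgroup.m_closed[OF Z] .
lemma inv_Z: "x \<in> Z \<Longrightarrow> inv x \<in> Z" using subgroup.m_inv_closed[OF Z] .
lemma finite_Z: "finite Z" using finite_subset[OF subgroup.subset[OF Z] fin] .
lemma card_Z_pos: "0 < card Z" using finite_Z one_Z card_gt_0_iff by blast

lemma \<rho>_carrier: "z \<in> Z \<Longrightarrow> \<rho> z \<in> carrier_mat m m"
  and \<rho>_mult: "x \<in> Z \<Longrightarrow> y \<in> Z \<Longrightarrow> \<rho> (x \<otimes> y) = \<rho> x * \<rho> y"
  and \<rho>_one: "\<rho> \<one> = 1\<^sub>m m"
  using \<rho> unfolding representation_def by auto

lemma sum_Z_reindex_mult: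
  assumes y: "y \<in> Z" shows "(\<Sum>z\<in>Z. f z) = (\<Sum>z\<in>Z. f (y \<otimes> z))"
proof -
  have "bij_betw (\<lambda>z. y \<otimes> z) Z Z"
  proof (rule bij_betwI[where g = "\<lambda>z. inv y \<otimes> z"])
    show "(\<lambda>z. y \<otimes> z) \<in> Z \<rightarrow> Z" "(\<lambda>z. inv y \<otimes> z) \<in> Z \<rightarrow> Z" using y mult_Z inv_Z by auto
  qed (use y ZG in \<open>simp_all add: m_assoc[symmetric]\<close>)
  then show ?thesis by (rule sum.reindex_bij_betw[symmetric])
qed

text \<open>Characters of \<open>Z\<close> are normalised to be \<open>1\<close> off \<open>Z\<close>, so that they form a finite set.\<close>
definition chars :: "('a \<Rightarrow> complex) set" where
  "chars = {\<chi>. is_character G Z \<chi> \<and> (\<forall>x. x \<notin> Z \<longrightarrow> \<chi> x = 1)}"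

lemma chars_mult: "\<chi> \<in> chars \<Longrightarrow> x \<in> Z \<Longrightarrow> y \<in> Z \<Longrightarrow> \<chi> (x \<otimes> y) = \<chi> x * \<chi> y"
  and chars_one: "\<chi> \<in> chars \<Longrightarrow> \<chi> \<one> = 1"
  unfolding chars_def is_character_def by simp_all

lemma chars_inv_mult: "\<chi> \<in> chars \<Longrightarrow> x \<in> Z \<Longrightarrow> \<chi> (inv x) * \<chi> x = 1"
  using character_inv_mult[OF Z] unfolding chars_def by blast

lemma trivial_char: "(\<lambda>_. 1) \<in> chars"
  unfolding chars_def is_character_def by simp

lemma chars_root_of_unity:
  assumes \<chi>: "\<chi> \<in> chars" and x: "x \<in> Z" shows "\<chi> x ^ card Z = 1"
proof -
  interpret Zgrp: group "G\<lparr>carrier := Z\<rparr>" using subgroup.subgroup_is_group[OF Z is_group] .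
  have "x [^]\<^bsub>G\<lparr>carrier := Z\<rparr>\<^esub> order (G\<lparr>carrier := Z\<rparr>) = \<one>"
    using Zgrp.pow_order_eq_1 finite_Z x by simp
  then have "x [^] card Z = \<one>" unfolding order_def by (simp add: nat_pow_consistent[symmetric])
  moreover have "\<chi> (x [^] card Z) = \<chi> x ^ card Z"
    using character_nat_pow[OF Z _ x] \<chi> unfolding chars_def by blast
  ultimately show ?thesis using chars_one[OF \<chi>] by simp
qed

lemma finite_chars: "finite chars"
proof -
  let ?R = "{w::complex. w ^ card Z = 1}"
  let ?f = "\<lambda>g x. if x \<in> Z then g x else (1::complex)"
  have "chars \<subseteq> ?f ` (Z \<rightarrow>\<^sub>E ?R)"
  proof
    fix \<chi> assume \<chi>: "\<chi> \<in> chars"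
    have "\<chi> = ?f (restrict \<chi> Z)" using \<chi> unfolding chars_def by (auto simp: fun_eq_iff)
    moreover have "restrict \<chi> Z \<in> Z \<rightarrow>\<^sub>E ?R" using chars_root_of_unity[OF \<chi>] by auto
    ultimately show "\<chi> \<in> ?f ` (Z \<rightarrow>\<^sub>E ?R)" by (rule image_eqI)
  qed
  moreover have "finite ?R" by (rule finite_roots_unity) (use card_Z_pos in simp)
  then have "finite (?f ` (Z \<rightarrow>\<^sub>E ?R))" by (intro finite_imageI finite_PiE finite_Z)
  ultimately show ?thesis by (rule finite_subset)
qed

lemma sum_multiplicative_eq_0:
  assumes f: "\<And>x y. x \<in> Z \<Longrightarrow> y \<in> Z \<Longrightarrow> f (x \<otimes> y) = f x * (f y :: complex)"
    and y: "y \<in> Z" "f y \<noteq> 1"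
  shows "(\<Sum>z\<in>Z. f z) = 0"
proof -
  have "(\<Sum>z\<in>Z. f z) = (\<Sum>z\<in>Z. f (y \<otimes> z))" by (rule sum_Z_reindex_mult[OF y(1)])
  also have "\<dots> = f y * (\<Sum>z\<in>Z. f z)" using f y(1) by (simp add: sum_distrib_left)
  finally have "(\<Sum>z\<in>Z. f z) = f y * (\<Sum>z\<in>Z. f z)" .
  then have "(1 - f y) * (\<Sum>z\<in>Z. f z) = 0" by (simp add: algebra_simps)
  then show ?thesis using y(2) by simp
qed

lemma chars_orthogonality:
  assumes \<chi>: "\<chi> \<in> chars" and \<psi>: "\<psi> \<in> chars"
  shows "(\<Sum>z\<in>Z. \<chi> (inv z) * \<psi> z) = (if \<chi> = \<psi> then of_nat (card Z) else 0)"
proof (cases "\<chi> = \<psi>")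
  case True
  then show ?thesis using chars_inv_mult[OF \<chi>] by simp
next
  case False
  then obtain y where y: "\<chi> y \<noteq> \<psi> y" by (auto simp: fun_eq_iff)
  have "y \<in> Z"
  proof (rule ccontr)
    assume "y \<notin> Z"
    then show False using \<chi> \<psi> y unfolding chars_def by simp
  qed
  have "\<chi> (inv (x \<otimes> z)) * \<psi> (x \<otimes> z) = (\<chi> (inv x) * \<psi> x) * (\<chi> (inv z) * \<psi> z)"
    if "x \<in> Z" "z \<in> Z" for x z
  proof -
    have "inv (x \<otimes> z) = inv x \<otimes> inv z" using that ZG by (simp add: inv_mult)
    then show ?thesis using chars_mult[OF \<chi>] chars_mult[OF \<psi>] inv_Z that by simp
  qed
  moreover have "\<chi> (inv y) * \<psi> y \<noteq> 1"
  proof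
    assume "\<chi> (inv y) * \<psi> y = 1"
    then have "\<psi> y = (\<chi> (inv y) * \<chi> y) * \<psi> y" using chars_inv_mult[OF \<chi> \<open>y \<in> Z\<close>] by simp
    also have "\<dots> = \<chi> y" using \<open>\<chi> (inv y) * \<psi> y = 1\<close> by (simp add: mult_ac)
    finally show False using y by simp
  qed
  ultimately have "(\<Sum>z\<in>Z. \<chi> (inv z) * \<psi> z) = 0"
    using sum_multiplicative_eq_0[of "\<lambda>z. \<chi> (inv z) * \<psi> z", OF _ \<open>y \<in> Z\<close>] by blast
  then show ?thesis using False by simp
qed

lemma sum_chars:
  assumes w: "w \<in> Z"
  shows "(\<Sum>\<chi>\<in>chars. \<chi> w) = (if w = \<one> then of_nat (card chars) else 0)"
proof (cases "w = \<one>")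
  case True
  then have "(\<Sum>\<chi>\<in>chars. \<chi> w) = (\<Sum>\<chi>\<in>chars. 1)" using chars_one by (intro sum.cong) auto
  then show ?thesis using True by simp
next
  case False
  interpret Zgrp: comm_group "G\<lparr>carrier := Z\<rparr>" using subgroup_comm_group[OF Z] .
  obtain \<psi>0 where "is_character (G\<lparr>carrier := Z\<rparr>) Z \<psi>0" "\<psi>0 w \<noteq> 1"
    using Zgrp.character_separation finite_Z w False by auto
  then have \<psi>0: "is_character G Z \<psi>0" "\<psi>0 w \<noteq> 1" unfolding is_character_def by simp_all
  define \<psi> where "\<psi> x = (if x \<in> Z then \<psi>0 x else 1)" for x
  have \<psi>: "\<psi> \<in> chars" using \<psi>0(1) one_Z mult_Z unfolding chars_def is_character_def \<psi>_def by simp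
  define T where "T \<chi> x = (if x \<in> Z then \<psi> x * \<chi> x else 1)" for \<chi> x
  have T: "T \<chi> \<in> chars" if \<chi>: "\<chi> \<in> chars" for \<chi>
    using one_Z mult_Z chars_one[OF \<chi>] chars_one[OF \<psi>] chars_mult[OF \<chi>] chars_mult[OF \<psi>]
    unfolding chars_def is_character_def T_def by simp
  have "inj_on T chars"
  proof (rule inj_onI, rule ext)
    fix \<chi> \<chi>' x assume \<chi>: "\<chi> \<in> chars" "\<chi>' \<in> chars" and eq: "T \<chi> = T \<chi>'"
    show "\<chi> x = \<chi>' x"
    proof (cases "x \<in> Z")
      case True
      then have "\<psi> x * \<chi> x = \<psi> x * \<chi>' x" using fun_cong[OF eq, of x] unfolding T_def by simp
      moreover have "\<psi> x \<noteq> 0" using chars_inv_mult[OF \<psi> True] by auto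
      ultimately show ?thesis by simp
    next
      case False
      then show ?thesis using \<chi> unfolding chars_def by simp
    qed
  qed
  moreover have "T ` chars = chars"
    using T calculation by (intro card_subset_eq[OF finite_chars]) (auto simp: card_image)
  ultimately have "(\<Sum>\<chi>\<in>chars. \<chi> w) = (\<Sum>\<chi>\<in>chars. T \<chi> w)"
    using sum.reindex[of T chars "\<lambda>\<chi>. \<chi> w"] by simp
  also have "\<dots> = \<psi> w * (\<Sum>\<chi>\<in>chars. \<chi> w)" unfolding T_def using w by (simp add: sum_distrib_left)
  finally have "(1 - \<psi> w) * (\<Sum>\<chi>\<in>chars. \<chi> w) = 0" by (simp add: algebra_simps)
  then show ?thesis using \<psi>0(2) w False unfolding \<psi>_def by simp
qed

lemma card_chars: "card chars = card Z"
proof -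
  have "(\<Sum>\<chi>\<in>chars. \<Sum>z\<in>Z. \<chi> z) = (\<Sum>\<chi>\<in>chars. if (\<lambda>_. 1) = \<chi> then of_nat (card Z) else 0)"
    using chars_orthogonality[OF trivial_char] by (intro sum.cong) auto
  also have "\<dots> = of_nat (card Z)" using finite_chars trivial_char by simp
  finally have "of_nat (card Z) = (\<Sum>z\<in>Z. \<Sum>\<chi>\<in>chars. \<chi> z)" by (simp add: sum.swap[of _ chars])
  also have "\<dots> = (\<Sum>z\<in>Z. if z = \<one> then of_nat (card chars) else 0)"
    using sum_chars by (intro sum.cong) auto
  also have "\<dots> = (of_nat (card chars) :: complex)" using finite_Z one_Z by simp
  finally show ?thesis by simp
qed

definition lin_comb :: "('a \<Rightarrow> complex) \<Rightarrow> complex mat" where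
  "lin_comb f = mat m m (\<lambda>(i, j). \<Sum>z\<in>Z. f z * \<rho> z $$ (i, j))"

lemma lin_comb_carrier: "lin_comb f \<in> carrier_mat m m"
  and lin_comb_dim [simp]: "dim_row (lin_comb f) = m" "dim_col (lin_comb f) = m"
  unfolding lin_comb_def by simp_all

lemma lin_comb_index: "i < m \<Longrightarrow> j < m \<Longrightarrow> lin_comb f $$ (i, j) = (\<Sum>z\<in>Z. f z * \<rho> z $$ (i, j))"
  unfolding lin_comb_def by simp

lemma lin_comb_cong: "(\<And>z. z \<in> Z \<Longrightarrow> f z = g z) \<Longrightarrow> lin_comb f = lin_comb g"
  unfolding lin_comb_def by (intro cong_mat refl) (auto intro: sum.cong)

lemma lin_comb_delta:
  assumes y: "y \<in> Z" shows "lin_comb (\<lambda>z. if z = y then 1 else 0) = \<rho> y"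
proof (rule eq_matI)
  fix i j assume "i < dim_row (\<rho> y)" "j < dim_col (\<rho> y)"
  then have ij: "i < m" "j < m" using \<rho>_carrier[OF y] by auto
  have "(\<Sum>z\<in>Z. (if z = y then 1 else 0) * \<rho> z $$ (i, j)) = (\<Sum>z\<in>Z. if z = y then \<rho> z $$ (i, j) else 0)"
    by (intro sum.cong) auto
  also have "\<dots> = \<rho> y $$ (i, j)" using y finite_Z by (simp add: sum.delta')
  finally have "(\<Sum>z\<in>Z. (if z = y then 1 else 0) * \<rho> z $$ (i, j)) = \<rho> y $$ (i, j)" .
  then show "lin_comb (\<lambda>z. if z = y then 1 else 0) $$ (i, j) = \<rho> y $$ (i, j)"
    using lin_comb_index[OF ij] by simp
qed (use \<rho>_carrier[OF y] lin_comb_carrier in auto)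

lemma \<rho>_mult_index:
  assumes "x \<in> Z" "y \<in> Z" "i < m" "j < m"
  shows "\<rho> (x \<otimes> y) $$ (i, j) = (\<Sum>k<m. \<rho> x $$ (i, k) * \<rho> y $$ (k, j))"
  using \<rho>_mult[OF assms(1,2)] \<rho>_carrier[OF assms(1)] \<rho>_carrier[OF assms(2)] assms(3,4)
  by (auto simp: scalar_prod_def lessThan_atLeast0 intro: sum.cong)

lemma lin_comb_mult: "lin_comb f * lin_comb g = lin_comb (\<lambda>u. \<Sum>z\<in>Z. f z * g (inv z \<otimes> u))"
proof (rule eq_matI)
  fix i j assume "i < dim_row (lin_comb (\<lambda>u. \<Sum>z\<in>Z. f z * g (inv z \<otimes> u)))"
    "j < dim_col (lin_comb (\<lambda>u. \<Sum>z\<in>Z. f z * g (inv z \<otimes> u)))"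
  then have ij: "i < m" "j < m" by simp_all
  have reindex: "(\<Sum>w\<in>Z. (f z * g w) * \<rho> (z \<otimes> w) $$ (i, j))
      = (\<Sum>u\<in>Z. (f z * g (inv z \<otimes> u)) * \<rho> u $$ (i, j))" if z: "z \<in> Z" for z
  proof -
    have "(\<Sum>w\<in>Z. (f z * g w) * \<rho> (z \<otimes> w) $$ (i, j))
        = (\<Sum>u\<in>Z. (f z * g (inv z \<otimes> u)) * \<rho> (z \<otimes> (inv z \<otimes> u)) $$ (i, j))"
      by (rule sum_Z_reindex_mult[OF inv_Z[OF z]])
    also have "\<dots> = (\<Sum>u\<in>Z. (f z * g (inv z \<otimes> u)) * \<rho> u $$ (i, j))"
      using z ZG by (intro sum.cong refl) (simp add: m_assoc[symmetric])
    finally show ?thesis .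
  qed
  have "(lin_comb f * lin_comb g) $$ (i, j) = (\<Sum>k<m. lin_comb f $$ (i, k) * lin_comb g $$ (k, j))"
    using ij by (auto simp: scalar_prod_def lessThan_atLeast0 intro: sum.cong)
  also have "\<dots> = (\<Sum>k<m. (\<Sum>z\<in>Z. f z * \<rho> z $$ (i, k)) * (\<Sum>w\<in>Z. g w * \<rho> w $$ (k, j)))"
    using ij by (intro sum.cong refl) (simp add: lin_comb_index)
  also have "\<dots> = (\<Sum>k<m. \<Sum>z\<in>Z. \<Sum>w\<in>Z. (f z * g w) * (\<rho> z $$ (i, k) * \<rho> w $$ (k, j)))"
    by (intro sum.cong refl) (simp add: sum_product mult_ac)
  also have "\<dots> = (\<Sum>z\<in>Z. \<Sum>w\<in>Z. \<Sum>k<m. (f z * g w) * (\<rho> z $$ (i, k) * \<rho> w $$ (k, j)))"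
    by (subst sum.swap) (rule sum.cong[OF refl], rule sum.swap)
  also have "\<dots> = (\<Sum>z\<in>Z. \<Sum>w\<in>Z. (f z * g w) * \<rho> (z \<otimes> w) $$ (i, j))"
    using ij by (intro sum.cong refl) (simp add: \<rho>_mult_index sum_distrib_left)
  also have "\<dots> = (\<Sum>z\<in>Z. \<Sum>u\<in>Z. (f z * g (inv z \<otimes> u)) * \<rho> u $$ (i, j))"
    using reindex by (rule sum.cong[OF refl])
  also have "\<dots> = (\<Sum>u\<in>Z. (\<Sum>z\<in>Z. f z * g (inv z \<otimes> u)) * \<rho> u $$ (i, j))"
    by (subst sum.swap) (simp add: sum_distrib_right)
  also have "\<dots> = lin_comb (\<lambda>u. \<Sum>z\<in>Z. f z * g (inv z \<otimes> u)) $$ (i, j)"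
    using lin_comb_index[OF ij] by simp
  finally show "(lin_comb f * lin_comb g) $$ (i, j) = lin_comb (\<lambda>u. \<Sum>z\<in>Z. f z * g (inv z \<otimes> u)) $$ (i, j)" .
qed (use lin_comb_carrier in auto)

definition char_ext :: "('a \<Rightarrow> complex) \<Rightarrow> 'a \<Rightarrow> complex" where
  "char_ext \<chi> = (SOME \<psi>. is_character G (carrier G) \<psi> \<and> (\<forall>b \<in> Z. \<psi> b = \<chi> b))"

lemma char_ext:
  assumes "\<chi> \<in> chars"
  shows "is_character G (carrier G) (char_ext \<chi>)" "\<And>b. b \<in> Z \<Longrightarrow> char_ext \<chi> b = \<chi> b"
proof -
  have "\<exists>\<psi>. is_character G (carrier G) \<psi> \<and> (\<forall>b \<in> Z. \<psi> b = \<chi> b)"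
    using character_extension[OF fin Z] assms unfolding chars_def by blast
  then have "is_character G (carrier G) (char_ext \<chi>) \<and> (\<forall>b \<in> Z. char_ext \<chi> b = \<chi> b)"
    unfolding char_ext_def by (rule someI_ex)
  then show "is_character G (carrier G) (char_ext \<chi>)" "\<And>b. b \<in> Z \<Longrightarrow> char_ext \<chi> b = \<chi> b"
    by blast+
qed

lemma char_ext_mult:
  "\<chi> \<in> chars \<Longrightarrow> a \<in> carrier G \<Longrightarrow> b \<in> carrier G \<Longrightarrow> char_ext \<chi> (a \<otimes> b) = char_ext \<chi> a * char_ext \<chi> b"
  using char_ext(1) unfolding is_character_def by blast

lemma sum_chars_diagonal:
  "(\<Sum>z\<in>Z. \<Sum>\<chi>\<in>chars. \<Sum>\<psi>\<in>chars. c \<chi> \<psi> * (\<chi> (inv z) * \<psi> z)) = of_nat (card Z) * (\<Sum>\<chi>\<in>chars. c \<chi> \<chi>)"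
proof -
  have "(\<Sum>z\<in>Z. \<Sum>\<chi>\<in>chars. \<Sum>\<psi>\<in>chars. c \<chi> \<psi> * (\<chi> (inv z) * \<psi> z))
      = (\<Sum>\<chi>\<in>chars. \<Sum>\<psi>\<in>chars. \<Sum>z\<in>Z. c \<chi> \<psi> * (\<chi> (inv z) * \<psi> z))"
    by (subst sum.swap) (rule sum.cong[OF refl], rule sum.swap)
  also have "\<dots> = (\<Sum>\<chi>\<in>chars. \<Sum>\<psi>\<in>chars. if \<chi> = \<psi> then c \<chi> \<psi> * of_nat (card Z) else 0)"
    by (intro sum.cong refl) (simp add: sum_distrib_left[symmetric] chars_orthogonality)
  also have "\<dots> = (\<Sum>\<chi>\<in>chars. c \<chi> \<chi> * of_nat (card Z))"
    using finite_chars by (intro sum.cong refl) (simp add: sum.delta)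
  also have "\<dots> = of_nat (card Z) * (\<Sum>\<chi>\<in>chars. c \<chi> \<chi>)"
    by (simp add: sum_distrib_left mult.commute)
  finally show ?thesis .
qed

text \<open>The matrix \<open>\<rho> z\<close> decomposes along the characters of \<open>Z\<close>; replacing each character
  by an extension to \<open>G\<close> in the Fourier expansion extends \<open>\<rho>\<close> to \<open>G\<close>.\<close>
definition coeff :: "'a \<Rightarrow> 'a \<Rightarrow> complex" where
  "coeff a z = (\<Sum>\<chi>\<in>chars. char_ext \<chi> a * \<chi> (inv z)) / of_nat (card Z)"

lemma coeff_convolution:
  assumes a: "a \<in> carrier G" and b: "b \<in> carrier G" and u: "u \<in> Z"
  shows "(\<Sum>z\<in>Z. coeff a z * coeff b (inv z \<otimes> u)) = coeff (a \<otimes> b) u"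
proof -
  let ?n = "of_nat (card Z) :: complex"
  let ?c = "\<lambda>\<chi> \<psi>. char_ext \<chi> a * char_ext \<psi> b * \<psi> (inv u)"
  have inv_eq: "\<psi> (inv (inv z \<otimes> u)) = \<psi> (inv u) * \<psi> z" if z: "z \<in> Z" and \<psi>: "\<psi> \<in> chars" for z \<psi>
  proof -
    have "inv (inv z \<otimes> u) = inv u \<otimes> z" using z u ZG by (simp add: inv_mult_group)
    then show ?thesis using chars_mult[OF \<psi> inv_Z[OF u] z] by simp
  qed
  have "coeff a z * coeff b (inv z \<otimes> u)
      = (\<Sum>\<chi>\<in>chars. \<Sum>\<psi>\<in>chars. ?c \<chi> \<psi> * (\<chi> (inv z) * \<psi> z)) / (?n * ?n)" if z: "z \<in> Z" for z
  proof -
    have "(\<Sum>\<psi>\<in>chars. char_ext \<psi> b * \<psi> (inv (inv z \<otimes> u)))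
        = (\<Sum>\<psi>\<in>chars. char_ext \<psi> b * (\<psi> (inv u) * \<psi> z))"
      using inv_eq[OF z] by (intro sum.cong refl) simp
    then show ?thesis unfolding coeff_def by (simp add: sum_product mult_ac)
  qed
  then have "(\<Sum>z\<in>Z. coeff a z * coeff b (inv z \<otimes> u))
      = (\<Sum>z\<in>Z. \<Sum>\<chi>\<in>chars. \<Sum>\<psi>\<in>chars. ?c \<chi> \<psi> * (\<chi> (inv z) * \<psi> z)) / (?n * ?n)"
    by (simp add: sum_divide_distrib)
  also have "\<dots> = (\<Sum>\<chi>\<in>chars. ?c \<chi> \<chi>) / ?n"
    unfolding sum_chars_diagonal using card_Z_pos by simp
  also have "(\<Sum>\<chi>\<in>chars. ?c \<chi> \<chi>) = (\<Sum>\<chi>\<in>chars. char_ext \<chi> (a \<otimes> b) * \<chi> (inv u))"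
    using char_ext_mult a b by (intro sum.cong refl) simp
  finally show ?thesis unfolding coeff_def .
qed

lemma coeff_on_Z:
  assumes y: "y \<in> Z" and z: "z \<in> Z"
  shows "coeff y z = (if z = y then 1 else 0)"
proof -
  have "(\<Sum>\<chi>\<in>chars. char_ext \<chi> y * \<chi> (inv z)) = (\<Sum>\<chi>\<in>chars. \<chi> (y \<otimes> inv z))"
    using char_ext(2) y chars_mult inv_Z z by (intro sum.cong refl) simp
  also have "\<dots> = (if y \<otimes> inv z = \<one> then of_nat (card Z) else 0)"
    using sum_chars[OF mult_Z[OF y inv_Z[OF z]]] card_chars by simp
  also have "y \<otimes> inv z = \<one> \<longleftrightarrow> z = y"
  proof
    assume "y \<otimes> inv z = \<one>"
    then have "y \<otimes> inv z \<otimes> z = z" using z ZG by simp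
    then show "z = y" using y z ZG by (simp add: m_assoc)
  qed (use y ZG in simp)
  finally show ?thesis unfolding coeff_def using card_Z_pos by simp
qed

definition extended_rep :: "'a \<Rightarrow> complex mat" where
  "extended_rep a = lin_comb (coeff a)"

lemma extended_rep_on_Z:
  assumes "y \<in> Z" shows "extended_rep y = \<rho> y"
proof -
  have "extended_rep y = lin_comb (\<lambda>z. if z = y then 1 else 0)"
    unfolding extended_rep_def using coeff_on_Z[OF assms] by (rule lin_comb_cong)
  then show ?thesis using lin_comb_delta[OF assms] by simp
qed

lemma representation_extended_rep: "representation G m extended_rep"
  unfolding representation_def
proof (intro conjI ballI)
  show "extended_rep g \<in> carrier_mat m m" for g
    unfolding extended_rep_def by (rule lin_comb_carrier)
  show "extended_rep (a \<otimes> b) = extended_rep a * extended_rep b" if "a \<in> carrier G" "b \<in> carrier G" for a b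
    unfolding extended_rep_def lin_comb_mult using that by (intro lin_comb_cong) (simp add: coeff_convolution)
  show "extended_rep \<one> = 1\<^sub>m m" using extended_rep_on_Z[OF one_Z] \<rho>_one by simp
qed

end

lemma (in comm_group) representation_extension:
  assumes "finite (carrier G)" "subgroup Z G" "representation (G\<lparr>carrier := Z\<rparr>) m \<rho>"
  obtains \<sigma> where "representation G m \<sigma>" "\<And>z. z \<in> Z \<Longrightarrow> \<sigma> z = \<rho> z"
proof -
  interpret abelian_extension G Z \<rho> m
    by (intro abelian_extension.intro abelian_extension_axioms.intro comm_group_axioms assms)
  show ?thesis using that representation_extended_rep extended_rep_on_Z by blast
qed


section \<open>Induced representations\<close>

lemma mat_mult_index:
  assumes "B \<in> carrier_mat n k" "C \<in> carrier_mat k n'" "p < n" "q < n'"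
  shows "(B * C) $$ (p, q) = (\<Sum>l<k. B $$ (p, l) * C $$ (l, q))"
  using assms by (auto simp: scalar_prod_def lessThan_atLeast0 intro: sum.cong)

lemma sum_lessThan_mult_split:
  fixes f :: "nat \<Rightarrow> 'b::comm_monoid_add"
  shows "(\<Sum>J<t * m. f J) = (\<Sum>j<t. \<Sum>l<m. f (j * m + l))"
proof -
  have "(\<Sum>J<t * m. f J) = (\<Sum>j<t. sum f {j * m..<j * m + m})" using sum.nat_group[of f m t] by simp
  also have "\<dots> = (\<Sum>j<t. \<Sum>l<m. f (j * m + l))"
  proof (rule sum.cong[OF refl])
    fix j
    have "sum f {0 + j * m..<m + j * m} = sum (\<lambda>l. f (l + j * m)) {0..<m}" by (rule sum.shift_bounds_nat_ivl)
    then show "sum f {j * m..<j * m + m} = (\<Sum>l<m. f (j * m + l))" by (simp add: add.commute lessThan_atLeast0)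
  qed
  finally show ?thesis .
qed

lemma div_mod_less_mult:
  fixes J t m :: nat assumes "J < t * m" shows "J div m < t" "J mod m < m"
proof -
  have "0 < m" using assms by (cases m) auto
  then show "J div m < t" "J mod m < m" using assms less_mult_imp_div_less[of J t m] by simp_all
qed

lemma block_index_less:
  fixes j l t m :: nat assumes "j < t" "l < m" shows "j * m + l < t * m"
proof -
  have "j * m + l < (j + 1) * m" using assms(2) by simp
  also have "\<dots> \<le> t * m" using assms(1) by (intro mult_right_mono) auto
  finally show ?thesis .
qed

locale induced_rep = group H for H (structure) +
  fixes A :: "'a set" and \<sigma> :: "'a \<Rightarrow> complex mat" and m :: nat
  assumes fin: "finite (carrier H)" and A: "subgroup A H"
    and \<sigma>: "representation (H\<lparr>carrier := A\<rparr>) m \<sigma>"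
begin

lemma \<sigma>_carrier: "a \<in> A \<Longrightarrow> \<sigma> a \<in> carrier_mat m m"
  and \<sigma>_mult: "a \<in> A \<Longrightarrow> b \<in> A \<Longrightarrow> \<sigma> (a \<otimes> b) = \<sigma> a * \<sigma> b"
  and \<sigma>_one: "\<sigma> \<one> = 1\<^sub>m m"
  using \<sigma> unfolding representation_def by auto

lemma AH: "a \<in> A \<Longrightarrow> a \<in> carrier H" using subgroup.mem_carrier[OF A] .

abbreviation "t \<equiv> card (rcosets A)"

lemma finite_rcosets: "finite (rcosets A)"
proof (rule finite_subset)
  show "rcosets A \<subseteq> Pow (carrier H)" using subgroup.rcosets_carrier[OF A is_group] by auto
qed (use fin in simp)

definition coset_enum :: "nat \<Rightarrow> 'a set" where
  "coset_enum = (SOME f. bij_betw f {..<t} (rcosets A))"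

lemma coset_enum: "bij_betw coset_enum {..<t} (rcosets A)"
proof -
  have "\<exists>f. bij_betw f {..<t} (rcosets A)"
    using ex_bij_betw_nat_finite[OF finite_rcosets] by (simp add: lessThan_atLeast0)
  then show ?thesis unfolding coset_enum_def by (rule someI_ex)
qed

definition rep :: "nat \<Rightarrow> 'a" where
  "rep i = (SOME x. x \<in> carrier H \<and> coset_enum i = A #> x)"

lemma rep: assumes "i < t" shows "rep i \<in> carrier H" "coset_enum i = A #> rep i"
proof -
  have "coset_enum i \<in> rcosets A" using coset_enum assms unfolding bij_betw_def by auto
  then have "\<exists>x. x \<in> carrier H \<and> coset_enum i = A #> x" unfolding RCOSETS_def by auto
  then have "rep i \<in> carrier H \<and> coset_enum i = A #> rep i" unfolding rep_def by (rule someI_ex)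
  then show "rep i \<in> carrier H" "coset_enum i = A #> rep i" by blast+
qed

lemma unique_coset_index:
  assumes y: "y \<in> carrier H"
  shows "\<exists>!j. j < t \<and> y \<otimes> inv (rep j) \<in> A"
proof -
  have mem_iff: "y \<otimes> inv (rep j) \<in> A \<longleftrightarrow> y \<in> coset_enum j" if "j < t" for j
    using subgroup.rcos_module[OF A is_group rep(1)[OF that] y] rep(2)[OF that] by simp
  have "A #> y \<in> coset_enum ` {..<t}"
    using y coset_enum unfolding bij_betw_def RCOSETS_def by auto
  then obtain j where j: "j < t" "coset_enum j = A #> y" by auto
  then have "y \<in> coset_enum j" using rcos_self[OF y A] by simp
  moreover have "j' = j" if "j' < t" "y \<in> coset_enum j'" for j'
  proof (rule ccontr)
    assume "j' \<noteq> j"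
    then have "coset_enum j' \<noteq> coset_enum j" "coset_enum j' \<in> rcosets A" "coset_enum j \<in> rcosets A"
      using coset_enum that(1) j(1) unfolding bij_betw_def inj_on_def by auto
    then have "disjnt (coset_enum j') (coset_enum j)"
      using rcos_disjoint[OF A] unfolding pairwise_def by auto
    then show False using that(2) \<open>y \<in> coset_enum j\<close> unfolding disjnt_def by auto
  qed
  ultimately show ?thesis using mem_iff j(1) by blast
qed

lemma rep_mult_inv_mem_iff:
  assumes "i < t" "j < t" shows "rep i \<otimes> inv (rep j) \<in> A \<longleftrightarrow> i = j"
  using unique_coset_index[OF rep(1)[OF assms(1)]] rep(1)[OF assms(1)] subgroup.one_closed[OF A] assms
  by auto

definition block :: "'a \<Rightarrow> complex mat" where
  "block y = (if y \<in> A then \<sigma> y else 0\<^sub>m m m)"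

lemma block_carrier: "block y \<in> carrier_mat m m"
  unfolding block_def using \<sigma>_carrier by simp

lemma block_mult:
  assumes a: "a \<in> A" and b: "b \<in> carrier H"
  shows "block a * block b = block (a \<otimes> b)"
proof (cases "b \<in> A")
  case True
  then show ?thesis using a \<sigma>_mult subgroup.m_closed[OF A a True] unfolding block_def by simp
next
  case False
  have "a \<otimes> b \<notin> A"
  proof
    assume "a \<otimes> b \<in> A"
    then have "inv a \<otimes> (a \<otimes> b) \<in> A" using subgroup.m_closed[OF A subgroup.m_inv_closed[OF A a]] by simp
    then show False using False a b AH by (simp add: m_assoc[symmetric])
  qed
  then show ?thesis using False a right_mult_zero_mat[OF \<sigma>_carrier[OF a]] unfolding block_def by simp
qed

text \<open>Only the coset containing \<open>y\<close> contributes to the block product.\<close>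
lemma sum_block_products:
  assumes y: "y \<in> carrier H" and z: "z \<in> carrier H" and pq: "p < m" "q < m"
  shows "(\<Sum>j<t. (block (y \<otimes> inv (rep j)) * block (rep j \<otimes> z)) $$ (p, q)) = block (y \<otimes> z) $$ (p, q)"
proof -
  obtain j0 where j0: "j0 < t" "y \<otimes> inv (rep j0) \<in> A"
    and unique: "\<And>j. j < t \<Longrightarrow> y \<otimes> inv (rep j) \<in> A \<Longrightarrow> j = j0"
    using unique_coset_index[OF y] by blast
  have "(\<Sum>j<t. (block (y \<otimes> inv (rep j)) * block (rep j \<otimes> z)) $$ (p, q))
      = (block (y \<otimes> inv (rep j0)) * block (rep j0 \<otimes> z)) $$ (p, q)"
  proof -
    have "(\<Sum>j\<in>{..<t} - {j0}. (block (y \<otimes> inv (rep j)) * block (rep j \<otimes> z)) $$ (p, q)) = 0"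
    proof (rule sum.neutral, rule ballI)
      fix j assume "j \<in> {..<t} - {j0}"
      then have "block (y \<otimes> inv (rep j)) = 0\<^sub>m m m" using unique unfolding block_def by auto
      then show "(block (y \<otimes> inv (rep j)) * block (rep j \<otimes> z)) $$ (p, q) = 0"
        using left_mult_zero_mat[OF block_carrier] pq by simp
    qed
    moreover have "j0 \<in> {..<t}" using j0(1) by simp
    ultimately show ?thesis by (simp add: sum.remove)
  qed
  also have "\<dots> = block (y \<otimes> inv (rep j0) \<otimes> (rep j0 \<otimes> z)) $$ (p, q)"
    using block_mult[OF j0(2)] rep(1)[OF j0(1)] z by simp
  also have "y \<otimes> inv (rep j0) \<otimes> (rep j0 \<otimes> z) = y \<otimes> z"
    using y z rep(1)[OF j0(1)] by (simp add: m_assoc inv_solve_left')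
  finally show ?thesis .
qed

text \<open>Row \<open>I\<close> of \<open>induced x\<close> is row \<open>I mod m\<close> of the block for the coset \<open>I div m\<close>.\<close>
definition induced :: "'a \<Rightarrow> complex mat" where
  "induced x = mat (t * m) (t * m) (\<lambda>(I, J). block (rep (I div m) \<otimes> x \<otimes> inv (rep (J div m))) $$ (I mod m, J mod m))"

lemma induced_carrier: "induced x \<in> carrier_mat (t * m) (t * m)"
  and induced_dim [simp]: "dim_row (induced x) = t * m" "dim_col (induced x) = t * m"
  unfolding induced_def by simp_all

lemma induced_index:
  "I < t * m \<Longrightarrow> J < t * m \<Longrightarrow>
    induced x $$ (I, J) = block (rep (I div m) \<otimes> x \<otimes> inv (rep (J div m))) $$ (I mod m, J mod m)"
  unfolding induced_def by simp

lemma induced_mult: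
  assumes x: "x \<in> carrier H" and y: "y \<in> carrier H"
  shows "induced (x \<otimes> y) = induced x * induced y"
proof (rule eq_matI)
  fix I K assume "I < dim_row (induced x * induced y)" "K < dim_col (induced x * induced y)"
  then have IK: "I < t * m" "K < t * m" by auto
  define i p k q where "i = I div m" "p = I mod m" "k = K div m" "q = K mod m"
  have ipkq: "i < t" "p < m" "k < t" "q < m" using div_mod_less_mult IK unfolding i_p_k_q_def by auto
  have "(induced x * induced y) $$ (I, K) = (\<Sum>J<t * m. induced x $$ (I, J) * induced y $$ (J, K))"
    using IK by (intro mat_mult_index[OF induced_carrier induced_carrier])
  also have "\<dots> = (\<Sum>j<t. \<Sum>l<m. induced x $$ (I, j * m + l) * induced y $$ (j * m + l, K))"
    by (rule sum_lessThan_mult_split)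
  also have "\<dots> = (\<Sum>j<t. \<Sum>l<m. block (rep i \<otimes> x \<otimes> inv (rep j)) $$ (p, l) * block (rep j \<otimes> (y \<otimes> inv (rep k))) $$ (l, q))"
    using IK block_index_less rep(1) y ipkq
    by (intro sum.cong refl) (simp add: induced_index i_p_k_q_def m_assoc)
  also have "\<dots> = (\<Sum>j<t. (block (rep i \<otimes> x \<otimes> inv (rep j)) * block (rep j \<otimes> (y \<otimes> inv (rep k)))) $$ (p, q))"
    using ipkq by (intro sum.cong refl mat_mult_index[OF block_carrier block_carrier, symmetric]) auto
  also have "\<dots> = block (rep i \<otimes> x \<otimes> (y \<otimes> inv (rep k))) $$ (p, q)"
    using sum_block_products rep(1) x y ipkq by simp
  also have "\<dots> = induced (x \<otimes> y) $$ (I, K)"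
    using induced_index[OF IK] rep(1) x y ipkq unfolding i_p_k_q_def by (simp add: m_assoc)
  finally show "induced (x \<otimes> y) $$ (I, K) = (induced x * induced y) $$ (I, K)" ..
qed auto

lemma induced_one: "induced \<one> = 1\<^sub>m (t * m)"
proof (rule eq_matI)
  fix I J assume "I < dim_row (1\<^sub>m (t * m))" "J < dim_col (1\<^sub>m (t * m))"
  then have IJ: "I < t * m" "J < t * m" by auto
  have d: "I div m < t" "I mod m < m" "J div m < t" "J mod m < m" using div_mod_less_mult IJ by auto
  show "induced \<one> $$ (I, J) = 1\<^sub>m (t * m) $$ (I, J)"
  proof (cases "I div m = J div m")
    case True
    then have "induced \<one> $$ (I, J) = \<sigma> \<one> $$ (I mod m, J mod m)"
      using induced_index[OF IJ] rep(1) d subgroup.one_closed[OF A] unfolding block_def by simp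
    also have "\<dots> = (if I = J then 1 else 0)"
      using \<sigma>_one d True by (simp, metis div_mult_mod_eq)
    finally show ?thesis using IJ by simp
  next
    case False
    then have "rep (I div m) \<otimes> \<one> \<otimes> inv (rep (J div m)) \<notin> A"
      using rep_mult_inv_mem_iff rep(1) d by simp
    then show ?thesis using induced_index[OF IJ] d False IJ unfolding block_def by auto
  qed
qed auto

lemma representation_induced: "representation H (t * m) induced"
  unfolding representation_def using induced_carrier induced_mult induced_one by blast

lemma induced_kernel:
  assumes x: "x \<in> carrier H" and ker: "induced x = 1\<^sub>m (t * m)" and m: "0 < m"
  shows "\<exists>g \<in> carrier H. g \<otimes> x \<otimes> inv g \<in> A \<and> \<sigma> (g \<otimes> x \<otimes> inv g) = 1\<^sub>m m"
proof -
  have "A #> \<one> \<in> rcosets A" unfolding RCOSETS_def by blast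
  then have t: "0 < t" using finite_rcosets card_gt_0_iff by blast
  let ?a = "rep 0 \<otimes> x \<otimes> inv (rep 0)"
  have entry: "block ?a $$ (p, q) = (if p = q then 1 else 0)" if pq: "p < m" "q < m" for p q
  proof -
    have lt: "p < t * m" "q < t * m" using block_index_less[OF t] pq by (metis add_0 mult_0)+
    have "block ?a $$ (p, q) = induced x $$ (p, q)" using induced_index[OF lt] pq by simp
    also have "\<dots> = (if p = q then 1 else 0)" using ker lt by simp
    finally show ?thesis .
  qed
  have "?a \<in> A"
  proof (rule ccontr)
    assume "?a \<notin> A"
    then show False using entry[OF m m] m unfolding block_def by simp
  qed
  moreover have "\<sigma> ?a = 1\<^sub>m m"
    by (rule eq_matI) (use entry \<open>?a \<in> A\<close> \<sigma>_carrier[OF \<open>?a \<in> A\<close>] in \<open>auto simp: block_def\<close>)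
  ultimately show ?thesis using rep(1)[OF t] by blast
qed

end

lemma (in group) induced_representation:
  assumes "finite (carrier G)" "subgroup A G" "representation (G\<lparr>carrier := A\<rparr>) m \<sigma>"
  obtains \<pi> where "representation G (card (rcosets A) * m) \<pi>"
    "\<And>x. x \<in> carrier G \<Longrightarrow> \<pi> x = 1\<^sub>m (card (rcosets A) * m) \<Longrightarrow> 0 < m \<Longrightarrow>
       \<exists>g \<in> carrier G. g \<otimes> x \<otimes> inv g \<in> A \<and> \<sigma> (g \<otimes> x \<otimes> inv g) = 1\<^sub>m m"
proof -
  interpret induced_rep G A \<sigma> m
    by (intro induced_rep.intro induced_rep_axioms.intro is_group assms)
  show ?thesis using that representation_induced induced_kernel by blast
qed


lemma (in group) exists_faithful_rep:
  assumes fin: "finite (carrier G)"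
  obtains n \<rho> where "faithful_rep G n \<rho>"
proof -
  let ?n = "card (rcosets {\<one>}) * 1"
  have "representation (G\<lparr>carrier := {\<one>}\<rparr>) 1 (\<lambda>_. 1\<^sub>m 1)"
    unfolding representation_def by simp
  from induced_representation[OF fin triv_subgroup this]
  obtain \<pi> where \<pi>: "representation G ?n \<pi>"
    and ker: "\<And>x. x \<in> carrier G \<Longrightarrow> \<pi> x = 1\<^sub>m ?n \<Longrightarrow> 0 < (1::nat) \<Longrightarrow>
      \<exists>g \<in> carrier G. g \<otimes> x \<otimes> inv g \<in> {\<one>} \<and> 1\<^sub>m 1 = (1\<^sub>m 1 :: complex mat)"
    by blast
  have "x = \<one>" if x: "x \<in> carrier G" "\<pi> x = 1\<^sub>m ?n" for x
  proof -
    obtain g where g: "g \<in> carrier G" "g \<otimes> x \<otimes> inv g = \<one>" using ker[OF x] by auto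
    have "inv g \<otimes> (g \<otimes> x \<otimes> inv g) \<otimes> g = x" using g(1) x(1) by (simp add: m_assoc inv_solve_left')
    then show ?thesis using g by simp
  qed
  moreover have "\<pi> \<one> = 1\<^sub>m ?n" using \<pi> unfolding representation_def by blast
  ultimately have "faithful_rep G ?n \<pi>"
    by (intro faithful_repI_kernel[OF \<pi>]) auto
  then show ?thesis using that by blast
qed

lemma (in group) exists_rep_faithful_on_center:
  assumes fin: "finite (carrier G)" and maximal: "maximal_abelian_subgroup A G"
    and \<rho>: "faithful_rep (G\<lparr>carrier := group_center G\<rparr>) m \<rho>"
  obtains \<pi> where "representation G (card (rcosets A) * m) \<pi>"
    "\<And>z. z \<in> group_center G \<Longrightarrow> \<pi> z = 1\<^sub>m (card (rcosets A) * m) \<Longrightarrow> z = \<one>"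
proof -
  let ?Z = "group_center G" and ?A = "G\<lparr>carrier := A\<rparr>" and ?t = "card (rcosets A)"
  have A: "subgroup A G" "comm_group ?A" using maximal unfolding maximal_abelian_subgroup_def by blast+
  have Z: "subgroup ?Z G" "?Z \<subseteq> A"
    using subgroup_group_center group_center_subset_maximal_abelian[OF fin maximal] by blast+
  have \<rho>_rep: "representation (?A\<lparr>carrier := ?Z\<rparr>) m \<rho>" and \<rho>_inj: "inj_on \<rho> ?Z"
    using \<rho> unfolding faithful_rep_iff by simp_all
  have "finite (carrier ?A)" using fin subgroup.subset[OF A(1)] finite_subset by auto
  then obtain \<sigma> where \<sigma>: "representation ?A m \<sigma>" "\<And>z. z \<in> ?Z \<Longrightarrow> \<sigma> z = \<rho> z"
    using comm_group.representation_extension[OF A(2) _ subgroup_incl[OF Z(1) A(1) Z(2)] \<rho>_rep] by blast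
  obtain \<pi> where \<pi>: "representation G (?t * m) \<pi>"
    and ker: "\<And>x. x \<in> carrier G \<Longrightarrow> \<pi> x = 1\<^sub>m (?t * m) \<Longrightarrow> 0 < m \<Longrightarrow>
       \<exists>g \<in> carrier G. g \<otimes> x \<otimes> inv g \<in> A \<and> \<sigma> (g \<otimes> x \<otimes> inv g) = 1\<^sub>m m"
    using induced_representation[OF fin A(1) \<sigma>(1)] by blast
  have "z = \<one>" if z: "z \<in> ?Z" "\<pi> z = 1\<^sub>m (?t * m)" for z
  proof -
    have "\<rho> z = \<rho> \<one>"
    proof (cases "m = 0")
      case True
      then show ?thesis
        using representation_dim_0[OF \<rho>_rep[unfolded True]] z(1) subgroup.one_closed[OF Z(1)] by simp
    next
      case False
      then obtain g where g: "g \<in> carrier G" "\<sigma> (g \<otimes> z \<otimes> inv g) = 1\<^sub>m m"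
        using ker z subgroup.mem_carrier[OF Z(1)] by blast
      have "g \<otimes> z = z \<otimes> g" using g(1) z(1) unfolding group_center_def by simp
      then have "g \<otimes> z \<otimes> inv g = z" using g(1) subgroup.mem_carrier[OF Z(1) z(1)] by (simp add: m_assoc)
      then show ?thesis using g(2) \<sigma>(2)[OF z(1)] \<rho>_rep unfolding representation_def by simp
    qed
    then show "z = \<one>" using inj_onD[OF \<rho>_inj] z(1) subgroup.one_closed[OF Z(1)] by blast
  qed
  then show ?thesis using that \<pi> by blast
qed

lemma (in group) m_faithful_le_center_times_index:
  assumes p: "Factorial_Ring.prime p" and order: "order G = p ^ k"
    and maximal: "maximal_abelian_subgroup A G"
  shows "m_faithful G \<le> m_faithful (G\<lparr>carrier := group_center G\<rparr>) * card (rcosets A)"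
proof -
  let ?Z = "G\<lparr>carrier := group_center G\<rparr>"
  have "0 < card (carrier G)" using order p prime_gt_0_nat unfolding order_def by simp
  then have fin: "finite (carrier G)" by (rule card_ge_0_finite)
  have Z: "group ?Z" using subgroup.subgroup_is_group[OF subgroup_group_center is_group] .
  have "finite (carrier ?Z)" using fin subgroup.subset[OF subgroup_group_center] finite_subset by auto
  then obtain n \<rho>0 where "faithful_rep ?Z n \<rho>0" by (rule group.exists_faithful_rep[OF Z])
  then obtain \<rho> where "faithful_rep ?Z (m_faithful ?Z) \<rho>" by (rule m_faithful_attained)
  then obtain \<pi> where \<pi>: "representation G (card (rcosets A) * m_faithful ?Z) \<pi>"
    and "\<And>z. z \<in> group_center G \<Longrightarrow> \<pi> z = 1\<^sub>m (card (rcosets A) * m_faithful ?Z) \<Longrightarrow> z = \<one>"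
    using exists_rep_faithful_on_center[OF fin maximal] by blast
  then have "faithful_rep G (card (rcosets A) * m_faithful ?Z) \<pi>"
    by (intro pgroup_faithful_repI_center[OF p order \<pi>])
  then show ?thesis by (simp add: m_faithful_le mult.commute)
qed

theorem corollary3p6:
  fixes H :: "('a, 'b) monoid_scheme" and p k :: nat and A :: "'a set"
  assumes "group H"
    and "Factorial_Ring.prime p"
    and "card (carrier H) = p ^ k"
    and "maximal_abelian_subgroup A H"
  shows "m_faithful H \<le> m_faithful (H\<lparr>carrier := group_center H\<rparr>) * card (rcosets\<^bsub>H\<^esub> A)"
  using group.m_faithful_le_center_times_index[OF assms(1,2) _ assms(4)] assms(3)
  unfolding order_def by blast

end
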